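(* Let $A$ and $B$ be self-adjoint operators on the same complex Hilbert space, with $B$ bounded, non-negative and $B \neq 0$. If $\lambda\in\mathbb{R}$ is an accumulation point of $\mathbb{R} \setminus \bigcup_{t\in\mathbb{R}} \sigma(A+tB)$, then $\lambda \in \sigma(A+tB)$ for all $t \in \mathbb{R}$. In particular, $\mathbb{R} \setminus \bigcup_{t\in\mathbb{R}} \sigma(A+tB)$ contains none of its accumulation points.
   Context: $\sigma(T)$ denotes the spectrum of an operator $T$. $A$ may be unbounded; $A+tB$ is defined on the domain of $A$. *)

theory Defs
  imports "HOL-Analysis.Analysis"
begin

class complex_vector = real_vector +
  fixes scaleC :: "complex \<Rightarrow> 'a \<Rightarrow> 'a" (infixr \<open>*\<^sub>C\<close> 75)
  assumes scaleC_add_right: "scaleC a (x + y) = scaleC a x + scaleC a y"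
    and scaleC_add_left: "scaleC (a + b) x = scaleC a x + scaleC b x"
    and scaleC_scaleC: "scaleC a (scaleC b x) = scaleC (a * b) x"
    and scaleC_one: "scaleC 1 x = x"
    and scaleR_scaleC: "scaleR r x = scaleC (complex_of_real r) x"

class complex_inner = complex_vector + real_normed_vector +
  fixes cinner :: "'a \<Rightarrow> 'a \<Rightarrow> complex"
  assumes cinner_commute: "cinner x y = cnj (cinner y x)"
    and cinner_add_left: "cinner (x + y) z = cinner x z + cinner y z"
    and cinner_scaleC_left: "cinner (scaleC r x) y = cnj r * cinner x y"
    and cinner_real: "Im (cinner x x) = 0"
    and cinner_ge_zero: "0 \<le> Re (cinner x x)"
    and cinner_eq_zero_iff: "cinner x x = 0 \<longleftrightarrow> x = 0"
    and norm_eq_sqrt_cinner: "norm x = sqrt (Re (cinner x x))"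

class chilbert_space = complex_inner + complete_space

instantiation complex :: chilbert_space
begin
definition scaleC_complex :: "complex \<Rightarrow> complex \<Rightarrow> complex" where
  "scaleC_complex a x = a * x"
definition cinner_complex :: "complex \<Rightarrow> complex \<Rightarrow> complex" where
  "cinner_complex x y = cnj x * y"
instance
  by standard (auto simp: scaleC_complex_def cinner_complex_def algebra_simps
      scaleR_conv_of_real complex_norm_square cmod_def complex_eq_iff power2_eq_square)
end

definition csubspace :: "'a::complex_vector set \<Rightarrow> bool" where
  "csubspace S \<longleftrightarrow> 0 \<in> S \<and> (\<forall>x\<in>S. \<forall>y\<in>S. x + y \<in> S) \<and> (\<forall>c. \<forall>x\<in>S. c *\<^sub>C x \<in> S)"

definition clinear_on :: "'a::complex_vector set \<Rightarrow> ('a \<Rightarrow> 'b::complex_vector) \<Rightarrow> bool" where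
  "clinear_on D T \<longleftrightarrow> (\<forall>x\<in>D. \<forall>y\<in>D. T (x + y) = T x + T y) \<and> (\<forall>c. \<forall>x\<in>D. T (c *\<^sub>C x) = c *\<^sub>C T x)"

definition adjoint_domain :: "'a::complex_inner set \<Rightarrow> ('a \<Rightarrow> 'a) \<Rightarrow> 'a set" where
  "adjoint_domain D T = {y. \<exists>z. \<forall>x\<in>D. cinner (T x) y = cinner x z}"

text \<open>Self-adjoint: densely defined linear, \<open>D(T*) = D(T)\<close> and \<open>T* = T\<close> on it
  (the adjoint value is unique by density, so this is \<open>T* = T\<close>).\<close>
definition self_adjoint :: "'a::complex_inner set \<Rightarrow> ('a \<Rightarrow> 'a) \<Rightarrow> bool" where
  "self_adjoint D T \<longleftrightarrow> csubspace D \<and> closure D = UNIV \<and> clinear_on D T \<and>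
     adjoint_domain D T = D \<and> (\<forall>x\<in>D. \<forall>y\<in>D. cinner (T x) y = cinner x (T y))"

definition bounded_op :: "('a::complex_inner \<Rightarrow> 'a) \<Rightarrow> bool" where
  "bounded_op T \<longleftrightarrow> clinear_on UNIV T \<and> (\<exists>K. \<forall>x. norm (T x) \<le> K * norm x)"

definition op_spectrum :: "'a::complex_inner set \<Rightarrow> ('a \<Rightarrow> 'a) \<Rightarrow> complex set" where
  "op_spectrum D T = {z. \<not> (bij_betw (\<lambda>x. T x - z *\<^sub>C x) D UNIV \<and>
      (\<exists>K. \<forall>y. norm (inv_into D (\<lambda>x. T x - z *\<^sub>C x) y) \<le> K * norm y))}"

end

(*
  Write R_mu for the resolvent of A + tB at a real point mu, and let U be the set of real
  points lying in the resolvent set of every A + sB.  For mu in U the form <R_mu Bx, Bx>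
  vanishes identically, by a supremum argument exploiting that every A + (t + s)B - mu has a
  bounded inverse.  Suppose a limit point lam of U were in the resolvent set of
  A + tB, and take u = Bx /= 0.  Then f(mu) = <R_mu u, u> vanishes on U and is continuous at lam,
  so f(lam) = 0, and the resolvent identity turns this into <R_mu u, R_lam u> = 0 for
  mu in U - {lam}.  Letting mu tend to lam gives |R_lam u|^2 = 0, hence u = 0.
*)

theory Submission
  imports Defs
begin

section \<open>Complex inner product spaces\<close>

lemma scaleC_zero_left [simp]: "0 *\<^sub>C x = (0::'a::complex_vector)"
  by (metis scaleR_scaleC scaleR_zero_left of_real_0)

lemma scaleC_zero_right [simp]: "a *\<^sub>C (0::'a::complex_vector) = 0"
  by (metis add_cancel_right_right scaleC_add_right)

lemma scaleC_minus_right: "a *\<^sub>C (- x) = - (a *\<^sub>C x::'a::complex_vector)"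
  by (metis eq_neg_iff_add_eq_0 scaleC_add_right scaleC_zero_right)

lemma scaleC_diff_right: "a *\<^sub>C (x - y) = a *\<^sub>C x - a *\<^sub>C (y::'a::complex_vector)"
  unfolding diff_conv_add_uminus by (simp only: scaleC_add_right scaleC_minus_right)

lemma scaleC_diff_left: "(a - b) *\<^sub>C x = a *\<^sub>C x - b *\<^sub>C (x::'a::complex_vector)"
  by (metis eq_diff_eq scaleC_add_left)

lemma scaleC_scaleR_commute: "a *\<^sub>C r *\<^sub>R x = r *\<^sub>R a *\<^sub>C (x::'a::complex_vector)"
  by (simp add: scaleR_scaleC scaleC_scaleC mult.commute)

lemma cinner_add_right: "cinner x (y + z) = cinner x y + cinner (x::'a::complex_inner) z"
  by (metis cinner_add_left cinner_commute complex_cnj_add)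

lemma cinner_scaleC_right: "cinner x (a *\<^sub>C y) = a * cinner (x::'a::complex_inner) y"
  by (metis cinner_commute cinner_scaleC_left complex_cnj_cnj complex_cnj_mult)

lemma cinner_zero_left [simp]: "cinner 0 (y::'a::complex_inner) = 0"
  by (metis add_cancel_right_right cinner_add_left)

lemma cinner_minus_left: "cinner (- x) (y::'a::complex_inner) = - cinner x y"
  by (metis cinner_add_left cinner_zero_left eq_neg_iff_add_eq_0)

lemma cinner_minus_right: "cinner x (- y::'a::complex_inner) = - cinner x y"
  by (metis cinner_commute cinner_minus_left complex_cnj_minus)

lemma cinner_diff_left: "cinner (x - y) (z::'a::complex_inner) = cinner x z - cinner y z"
  unfolding diff_conv_add_uminus by (simp only: cinner_add_left cinner_minus_left)

lemma cinner_diff_right: "cinner x (y - z::'a::complex_inner) = cinner x y - cinner x z"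
  unfolding diff_conv_add_uminus by (simp only: cinner_add_right cinner_minus_right)

lemma cinner_scaleR_left: "cinner (r *\<^sub>R x) (y::'a::complex_inner) = of_real r * cinner x y"
  by (simp add: scaleR_scaleC cinner_scaleC_left)

lemma cinner_scaleR_right: "cinner x (r *\<^sub>R y::'a::complex_inner) = of_real r * cinner x y"
  by (simp add: scaleR_scaleC cinner_scaleC_right)

lemmas cinner_simps = cinner_add_left cinner_add_right cinner_diff_left cinner_diff_right
  cinner_scaleC_left cinner_scaleC_right cinner_scaleR_left cinner_scaleR_right

lemma cinner_self_eq_norm_sq: "cinner x x = of_real ((norm (x::'a::complex_inner))\<^sup>2)"
  by (simp add: norm_eq_sqrt_cinner cinner_ge_zero complex_eq_iff cinner_real)

lemma norm_scaleC: "norm (a *\<^sub>C x) = cmod a * norm (x::'a::complex_inner)"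
proof -
  have "cinner (a *\<^sub>C x) (a *\<^sub>C x) = of_real ((cmod a)\<^sup>2) * cinner x x"
    by (simp add: cinner_scaleC_left cinner_scaleC_right complex_norm_square[symmetric] mult_ac)
  then show ?thesis
    by (simp add: norm_eq_sqrt_cinner[of x] norm_eq_sqrt_cinner[of "a *\<^sub>C x"] real_sqrt_mult)
qed

section \<open>Symmetric operators\<close>

text \<open>Self-adjointness without the density of the domain and the condition on the adjoint
  domain: the argument never uses them.\<close>

definition symmetric_op :: "'a::complex_inner set \<Rightarrow> ('a \<Rightarrow> 'a) \<Rightarrow> bool" where
  "symmetric_op D T \<longleftrightarrow> csubspace D \<and> clinear_on D T \<and>
     (\<forall>x\<in>D. \<forall>y\<in>D. cinner (T x) y = cinner x (T y))"

lemma symmetric_op_if_self_adjoint: "self_adjoint D T \<Longrightarrow> symmetric_op D T"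
  by (simp add: self_adjoint_def symmetric_op_def)

lemma symmetric_op_UNIV_iff:
  "symmetric_op UNIV T \<longleftrightarrow> (\<forall>x y. T (x + y) = T x + T y) \<and> (\<forall>a x. T (a *\<^sub>C x) = a *\<^sub>C T x) \<and>
     (\<forall>x y. cinner (T x) y = cinner x (T y))"
  by (simp add: symmetric_op_def csubspace_def clinear_on_def)

lemma symmetric_op_add_scaleR:
  assumes "symmetric_op D A" and "symmetric_op UNIV B"
  shows "symmetric_op D (\<lambda>x. A x + t *\<^sub>R B x)"
  using assms
  by (simp add: symmetric_op_def symmetric_op_UNIV_iff clinear_on_def cinner_simps
      scaleC_add_right scaleR_add_right scaleC_scaleR_commute)

lemma Im_cinner_symmetric_op:
  assumes "symmetric_op D T" "x \<in> D"
  shows "Im (cinner (T x) x) = 0"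
proof -
  have "cinner (T x) x = cnj (cinner (T x) x)"
    using assms by (metis cinner_commute symmetric_op_def)
  then show ?thesis
    by (metis cnj.sel(2) neg_equal_zero)
qed

lemma nonneg_quadratic_imp_le:
  fixes p c r :: real
  assumes nonneg: "\<And>t. 0 \<le> p - 2 * t * c + t\<^sup>2 * c * r" and "0 \<le> r"
  shows "c \<le> p * r"
proof (cases "r = 0")
  case True
  have "c \<le> 0"
  proof (rule ccontr)
    assume "\<not> c \<le> 0"
    then have "2 * ((p + 1) / (2 * c)) * c = p + 1"
      by simp
    with nonneg[of "(p + 1) / (2 * c)"] True show False
      by simp
  qed
  with True show ?thesis
    by simp
next
  case False
  with \<open>0 \<le> r\<close> have "0 < r"
    by simp
  then have "0 \<le> p - c / r"
    using nonneg[of "1 / r"] by (simp add: power2_eq_square field_simps)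
  with \<open>0 < r\<close> show ?thesis
    by (simp add: field_simps)
qed

lemma nonneg_symmetric_op_cauchy_schwarz:
  fixes N :: "'a::complex_inner \<Rightarrow> 'a"
  assumes sym: "symmetric_op UNIV N" and nonneg: "\<And>x. 0 \<le> Re (cinner (N x) x)"
  shows "(cmod (cinner (N x) y))\<^sup>2 \<le> Re (cinner (N x) x) * Re (cinner (N y) y)"
proof (rule nonneg_quadratic_imp_le)
  define c where "c = cinner (N x) y"
  have add: "N (u + v) = N u + N v" and scale: "N (a *\<^sub>C u) = a *\<^sub>C N u"
    and swap: "cinner (N u) v = cinner u (N v)" for u v a
    using sym by (simp_all add: symmetric_op_UNIV_iff)
  have real: "Im (cinner (N u) u) = 0" for u
    using sym by (rule Im_cinner_symmetric_op) simp
  have cmod_sq: "cmod c * cmod c = Re c * Re c + Im c * Im c"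
    by (metis cmod_power2 power2_eq_square)
  fix t :: real
  define a where "a = - of_real t * cnj c"
  have "cinner (N y) x = cnj c"
    unfolding c_def by (metis cinner_commute swap)
  then have "cinner (N (x + a *\<^sub>C y)) (x + a *\<^sub>C y) =
      cinner (N x) x + a * c + cnj a * cnj c + cnj a * a * cinner (N y) y"
    by (simp add: add scale cinner_simps c_def algebra_simps)
  also have "\<dots> = of_real (Re (cinner (N x) x) - 2 * t * (cmod c)\<^sup>2 + t\<^sup>2 * (cmod c)\<^sup>2 * Re (cinner (N y) y))"
    using real by (simp add: a_def complex_eq_iff cmod_sq power2_eq_square algebra_simps)
  finally show "0 \<le> Re (cinner (N x) x) - 2 * t * (cmod (cinner (N x) y))\<^sup>2 +
      t\<^sup>2 * (cmod (cinner (N x) y))\<^sup>2 * Re (cinner (N y) y)"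
    using nonneg[of "x + a *\<^sub>C y"] by (simp add: c_def)
qed (rule nonneg)

lemma cinner_cauchy_schwarz: "cmod (cinner x y) \<le> norm x * norm (y::'a::complex_inner)"
proof -
  have "symmetric_op UNIV (\<lambda>x::'a. x)"
    by (simp add: symmetric_op_UNIV_iff)
  then have "(cmod (cinner x y))\<^sup>2 \<le> Re (cinner x x) * Re (cinner y y)"
    using nonneg_symmetric_op_cauchy_schwarz[of "\<lambda>x. x"] by (simp add: cinner_ge_zero)
  also have "\<dots> = (norm x * norm y)\<^sup>2"
    by (simp add: cinner_self_eq_norm_sq power_mult_distrib)
  finally show ?thesis
    by (rule power2_le_imp_le) simp
qed

lemma scaled_Re_cinner_le: "\<sigma> * Re (cinner x y) \<le> \<bar>\<sigma>\<bar> * (norm x * norm (y::'a::complex_inner))"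
proof -
  have "\<sigma> * Re (cinner x y) \<le> \<bar>\<sigma>\<bar> * \<bar>Re (cinner x y)\<bar>"
    by (simp flip: abs_mult)
  also have "\<bar>Re (cinner x y)\<bar> \<le> norm x * norm y"
    using abs_Re_le_cmod cinner_cauchy_schwarz by (rule order_trans)
  finally show ?thesis
    by (simp add: mult_left_mono)
qed

lemma bounded_linear_cinner_left: "bounded_linear (\<lambda>x::'a::complex_inner. cinner x y)"
proof (rule bounded_linear_intro)
  show "cmod (cinner x y) \<le> norm x * norm y" for x
    by (rule cinner_cauchy_schwarz)
qed (simp_all add: cinner_add_left cinner_scaleR_left scaleR_conv_of_real)

lemma bounded_op_imp_bounded_linear: "bounded_op T \<Longrightarrow> bounded_linear T"
  unfolding bounded_op_def clinear_on_def
  by (metis (no_types, lifting) bounded_linear_intro mult.commute scaleR_scaleC iso_tuple_UNIV_I)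

lemma bounded_op_pos_bound:
  assumes "bounded_op T"
  obtains K where "K > 0" "\<And>x. norm (T x) \<le> K * norm x"
  using bounded_linear.pos_bounded[OF bounded_op_imp_bounded_linear[OF assms]]
  by (metis mult.commute)

lemma nonneg_symmetric_op_norm_sq_le:
  fixes N :: "'a::complex_inner \<Rightarrow> 'a"
  assumes sym: "symmetric_op UNIV N" and nonneg: "\<And>x. 0 \<le> Re (cinner (N x) x)"
    and bound: "\<And>x. norm (N x) \<le> K * norm x"
  shows "(norm (N x))\<^sup>2 \<le> K * Re (cinner (N x) x)"
proof (cases "N x = 0")
  case False
  let ?n = "norm (N x)"
  have "(?n\<^sup>2)\<^sup>2 = (cmod (cinner (N x) (N x)))\<^sup>2"
    by (simp add: cinner_self_eq_norm_sq norm_power)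
  also have "\<dots> \<le> Re (cinner (N x) x) * Re (cinner (N (N x)) (N x))"
    by (rule nonneg_symmetric_op_cauchy_schwarz[OF sym nonneg])
  also have "\<dots> \<le> Re (cinner (N x) x) * (K * ?n\<^sup>2)"
  proof (rule mult_left_mono)
    have "Re (cinner (N (N x)) (N x)) \<le> norm (N (N x)) * ?n"
      using complex_Re_le_cmod cinner_cauchy_schwarz order_trans by blast
    also have "\<dots> \<le> K * ?n * ?n"
      using bound by (simp add: mult_right_mono)
    finally show "Re (cinner (N (N x)) (N x)) \<le> K * ?n\<^sup>2"
      by (simp add: power2_eq_square)
  qed (rule nonneg)
  finally have "?n\<^sup>2 * ?n\<^sup>2 \<le> (K * Re (cinner (N x) x)) * ?n\<^sup>2"
    by (simp add: power2_eq_square algebra_simps)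
  moreover have "0 < ?n\<^sup>2"
    using False by simp
  ultimately show ?thesis
    by (rule mult_right_le_imp_le)
qed simp

section \<open>Resolvents\<close>

definition resolvent :: "'a::complex_vector set \<Rightarrow> ('a \<Rightarrow> 'a) \<Rightarrow> complex \<Rightarrow> 'a \<Rightarrow> 'a" where
  "resolvent D T z = inv_into D (\<lambda>x. T x - z *\<^sub>C x)"

lemma not_in_op_spectrum_iff:
  "z \<notin> op_spectrum D T \<longleftrightarrow> bij_betw (\<lambda>x. T x - z *\<^sub>C x) D UNIV \<and>
     (\<exists>K. \<forall>y. norm (resolvent D T z y) \<le> K * norm y)"
  by (simp add: op_spectrum_def resolvent_def)

context
  fixes D :: "'a::complex_vector set" and T :: "'a \<Rightarrow> 'a" and z :: complex
  assumes subspace: "csubspace D" and linear: "clinear_on D T"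
    and bij: "bij_betw (\<lambda>x. T x - z *\<^sub>C x) D UNIV"
begin

lemma resolvent_in_domain: "resolvent D T z y \<in> D"
  unfolding resolvent_def by (rule inv_into_into) (simp add: bij_betw_imp_surj_on[OF bij])

lemma resolvent_right_inverse: "T (resolvent D T z y) - z *\<^sub>C resolvent D T z y = y"
  using f_inv_into_f[of y "\<lambda>x. T x - z *\<^sub>C x" D] bij_betw_imp_surj_on[OF bij]
  by (simp add: resolvent_def)

lemma resolvent_eqI: "x \<in> D \<Longrightarrow> T x - z *\<^sub>C x = y \<Longrightarrow> resolvent D T z y = x"
  using inv_into_f_f[OF bij_betw_imp_inj_on[OF bij]] by (auto simp: resolvent_def)

lemma clinear_on_resolvent: "clinear_on UNIV (resolvent D T z)"
proof -
  let ?R = "resolvent D T z"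
  have "?R (y + w) = ?R y + ?R w" for y w
  proof (rule resolvent_eqI)
    show "?R y + ?R w \<in> D"
      using subspace resolvent_in_domain by (simp add: csubspace_def)
    show "T (?R y + ?R w) - z *\<^sub>C (?R y + ?R w) = y + w"
      using linear resolvent_in_domain resolvent_right_inverse[of y] resolvent_right_inverse[of w]
      by (simp add: clinear_on_def scaleC_add_right algebra_simps)
  qed
  moreover have "?R (a *\<^sub>C y) = a *\<^sub>C ?R y" for a y
  proof (rule resolvent_eqI)
    show "a *\<^sub>C ?R y \<in> D"
      using subspace resolvent_in_domain by (simp add: csubspace_def)
    have "T (a *\<^sub>C ?R y) - z *\<^sub>C a *\<^sub>C ?R y = a *\<^sub>C (T (?R y) - z *\<^sub>C ?R y)"
      using linear resolvent_in_domain
      by (simp add: clinear_on_def scaleC_diff_right scaleC_scaleC mult.commute[of z a])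
    then show "T (a *\<^sub>C ?R y) - z *\<^sub>C a *\<^sub>C ?R y = a *\<^sub>C y"
      by (simp add: resolvent_right_inverse)
  qed
  ultimately show ?thesis
    by (simp add: clinear_on_def)
qed

end

lemma symmetric_op_resolvent:
  fixes T :: "'a::complex_inner \<Rightarrow> 'a"
  assumes sym: "symmetric_op D T" and bij: "bij_betw (\<lambda>x. T x - z *\<^sub>C x) D UNIV"
    and real: "cnj z = z"
  shows "symmetric_op UNIV (resolvent D T z)"
proof -
  have subspace: "csubspace D" and linear: "clinear_on D T"
    using sym by (simp_all add: symmetric_op_def)
  let ?R = "resolvent D T z"
  have "cinner (?R x) y = cinner x (?R y)" for x y
  proof -
    have "cinner (?R x) y = cinner (?R x) (T (?R y) - z *\<^sub>C ?R y)"
      by (simp only: resolvent_right_inverse[OF subspace linear bij])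
    also have "\<dots> = cinner (T (?R x)) (?R y) - cnj z * cinner (?R x) (?R y)"
      using sym real resolvent_in_domain[OF subspace linear bij]
      by (simp add: symmetric_op_def cinner_diff_right cinner_scaleC_right)
    also have "\<dots> = cinner (T (?R x) - z *\<^sub>C ?R x) (?R y)"
      by (simp add: cinner_diff_left cinner_scaleC_left)
    also have "\<dots> = cinner x (?R y)"
      by (simp only: resolvent_right_inverse[OF subspace linear bij])
    finally show ?thesis .
  qed
  then show ?thesis
    using clinear_on_resolvent[OF subspace linear bij] by (simp add: symmetric_op_UNIV_iff clinear_on_def)
qed

lemma resolvent_identity:
  assumes subspace: "csubspace D" and linear: "clinear_on D T"
    and bij: "bij_betw (\<lambda>x. T x - z *\<^sub>C x) D UNIV" and bij0: "bij_betw (\<lambda>x. T x - z0 *\<^sub>C x) D UNIV"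
  shows "resolvent D T z u - resolvent D T z0 u = (z - z0) *\<^sub>C resolvent D T z0 (resolvent D T z u)"
proof -
  let ?w = "resolvent D T z u"
  have "T ?w - z0 *\<^sub>C ?w = u + (z - z0) *\<^sub>C ?w"
    using resolvent_right_inverse[OF subspace linear bij] by (simp add: scaleC_diff_left algebra_simps)
  then have "resolvent D T z0 (u + (z - z0) *\<^sub>C ?w) = ?w"
    by (rule resolvent_eqI[OF subspace linear bij0 resolvent_in_domain[OF subspace linear bij]])
  then have "?w = resolvent D T z0 u + (z - z0) *\<^sub>C resolvent D T z0 ?w"
    using clinear_on_resolvent[OF subspace linear bij0] by (simp add: clinear_on_def)
  then show ?thesis
    by (metis add_diff_cancel_left')
qed

lemma bounded_op_resolvent:
  assumes "csubspace D" "clinear_on D T" "z \<notin> op_spectrum D T"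
  shows "bounded_op (resolvent D T z)"
  using assms(3) clinear_on_resolvent[OF assms(1,2)] unfolding bounded_op_def not_in_op_spectrum_iff
  by blast

lemma norm_le_if_not_in_op_spectrum:
  assumes "csubspace D" "clinear_on D T" "z \<notin> op_spectrum D T"
  obtains K where "\<And>x. x \<in> D \<Longrightarrow> norm x \<le> K * norm (T x - z *\<^sub>C x)"
proof -
  obtain K where bij: "bij_betw (\<lambda>x. T x - z *\<^sub>C x) D UNIV"
    and K: "\<And>y. norm (resolvent D T z y) \<le> K * norm y"
    using assms(3) unfolding not_in_op_spectrum_iff by blast
  show thesis
  proof (rule that)
    fix x assume "x \<in> D"
    then have "resolvent D T z (T x - z *\<^sub>C x) = x"
      using resolvent_eqI[OF assms(1,2) bij] by blast
    then show "norm x \<le> K * norm (T x - z *\<^sub>C x)"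
      using K by metis
  qed
qed

lemma norm_resolvent_diff_le:
  fixes T :: "'a::complex_inner \<Rightarrow> 'a"
  assumes subspace: "csubspace D" and linear: "clinear_on D T"
    and bij: "bij_betw (\<lambda>x. T x - z *\<^sub>C x) D UNIV" and bij0: "bij_betw (\<lambda>x. T x - z0 *\<^sub>C x) D UNIV"
    and bound: "\<And>y. norm (resolvent D T z0 y) \<le> K * norm y" and "0 \<le> K"
    and close: "cmod (z - z0) * K \<le> 1/2"
  shows "norm (resolvent D T z u - resolvent D T z0 u) \<le> 2 * cmod (z - z0) * K * norm (resolvent D T z0 u)"
proof -
  let ?w = "resolvent D T z u" and ?v = "resolvent D T z0 u"
  have "norm (?w - ?v) = cmod (z - z0) * norm (resolvent D T z0 ?w)"
    using resolvent_identity[OF assms(1-4)] by (simp add: norm_scaleC)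
  also have "\<dots> \<le> cmod (z - z0) * (K * (norm ?v + norm (?w - ?v)))"
    using bound[of ?w] norm_triangle_sub[of ?w ?v] \<open>0 \<le> K\<close>
    by (intro mult_left_mono order_trans[OF bound]) auto
  finally have "norm (?w - ?v) \<le> cmod (z - z0) * K * norm ?v + (cmod (z - z0) * K) * norm (?w - ?v)"
    by (simp add: algebra_simps)
  moreover have "(cmod (z - z0) * K) * norm (?w - ?v) \<le> 1/2 * norm (?w - ?v)"
    using close by (rule mult_right_mono) simp
  ultimately show ?thesis
    by linarith
qed

lemma tendsto_resolvent:
  fixes T :: "'a::complex_inner \<Rightarrow> 'a"
  assumes subspace: "csubspace D" and linear: "clinear_on D T" and z0: "z0 \<notin> op_spectrum D T"
    and bij: "\<forall>\<^sub>F x in F. bij_betw (\<lambda>y. T y - f x *\<^sub>C y) D UNIV" and f: "(f \<longlongrightarrow> z0) F"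
  shows "((\<lambda>x. resolvent D T (f x) u) \<longlongrightarrow> resolvent D T z0 u) F"
proof -
  obtain K where K: "K > 0" "\<And>y. norm (resolvent D T z0 y) \<le> K * norm y"
    using bounded_op_pos_bound bounded_op_resolvent[OF assms(1-3)] by blast
  have bij0: "bij_betw (\<lambda>x. T x - z0 *\<^sub>C x) D UNIV"
    using z0 by (simp add: not_in_op_spectrum_iff)
  have "\<forall>\<^sub>F x in F. dist (f x) z0 < 1 / (2 * K)"
    using K(1) by (intro tendstoD[OF f]) simp
  then have "\<forall>\<^sub>F x in F. norm (resolvent D T (f x) u - resolvent D T z0 u)
      \<le> 2 * cmod (f x - z0) * K * norm (resolvent D T z0 u)"
    using bij
  proof eventually_elim
    case (elim x)
    then have "cmod (f x - z0) * K \<le> 1/2"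
      using K(1) by (simp add: dist_norm field_simps)
    with K(1) show ?case
      by (intro norm_resolvent_diff_le[OF subspace linear elim(2) bij0 K(2)]) simp_all
  qed
  moreover have "((\<lambda>x. 2 * cmod (f x - z0) * K * norm (resolvent D T z0 u)) \<longlongrightarrow> 0) F"
    by (intro tendsto_mult_right_zero tendsto_mult_left_zero tendsto_norm_zero LIM_zero f)
  ultimately have "((\<lambda>x. resolvent D T (f x) u - resolvent D T z0 u) \<longlongrightarrow> 0) F"
    by (rule Lim_null_comparison)
  then show ?thesis
    by (rule LIM_zero_cancel)
qed

lemma cinner_resolvents_eq_0:
  fixes S :: "'a::complex_inner \<Rightarrow> 'a"
  assumes S: "symmetric_op D S"
    and bij: "bij_betw (\<lambda>x. S x - z *\<^sub>C x) D UNIV" and bij0: "bij_betw (\<lambda>x. S x - z0 *\<^sub>C x) D UNIV"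
    and real: "cnj z0 = z0" and "z \<noteq> z0"
    and equal: "cinner (resolvent D S z u) u = cinner (resolvent D S z0 u) u"
  shows "cinner (resolvent D S z u) (resolvent D S z0 u) = 0"
proof -
  let ?R = "resolvent D S z" and ?R' = "resolvent D S z0"
  have subspace: "csubspace D" and linear: "clinear_on D S"
    using S by (simp_all add: symmetric_op_def)
  have "cnj (z - z0) * cinner (?R u) (?R' u) = cnj (z - z0) * cinner (?R' (?R u)) u"
    using symmetric_op_resolvent[OF S bij0 real] by (simp add: symmetric_op_UNIV_iff)
  also have "\<dots> = cinner (?R u - ?R' u) u"
    by (simp add: resolvent_identity[OF subspace linear bij bij0] cinner_scaleC_left)
  also have "\<dots> = 0"
    using equal by (simp add: cinner_diff_left)
  finally show ?thesis
    using \<open>z \<noteq> z0\<close> by simp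
qed

lemma eq_0_if_resolvent_form_vanishes:
  fixes S :: "'a::complex_inner \<Rightarrow> 'a" and lam :: real
  assumes S: "symmetric_op D S" and lam: "complex_of_real lam \<notin> op_spectrum D S"
    and "lam islimpt U"
    and bij: "\<And>\<mu>. \<mu> \<in> U \<Longrightarrow> bij_betw (\<lambda>x. S x - complex_of_real \<mu> *\<^sub>C x) D UNIV"
    and vanish: "\<And>\<mu>. \<mu> \<in> U \<Longrightarrow> cinner (resolvent D S (complex_of_real \<mu>) u) u = 0"
  shows "u = 0"
proof -
  define R where "R \<mu> = resolvent D S (complex_of_real \<mu>)" for \<mu>
  let ?F = "at lam within U"
  have subspace: "csubspace D" and linear: "clinear_on D S"
    using S by (simp_all add: symmetric_op_def)
  have bij_lam: "bij_betw (\<lambda>x. S x - complex_of_real lam *\<^sub>C x) D UNIV"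
    using lam by (simp add: not_in_op_spectrum_iff)
  have "?F \<noteq> bot"
    using \<open>lam islimpt U\<close> by (simp add: trivial_limit_within)
  have "\<forall>\<^sub>F \<mu> in ?F. bij_betw (\<lambda>x. S x - complex_of_real \<mu> *\<^sub>C x) D UNIV"
    unfolding eventually_at_filter by (simp add: bij)
  then have "((\<lambda>\<mu>. R \<mu> u) \<longlongrightarrow> R lam u) ?F"
    unfolding R_def using tendsto_of_real[OF tendsto_ident_at]
    by (rule tendsto_resolvent[OF subspace linear lam])
  then have R_tendsto: "((\<lambda>\<mu>. cinner (R \<mu> u) v) \<longlongrightarrow> cinner (R lam u) v) ?F" for v
    by (rule bounded_linear.tendsto[OF bounded_linear_cinner_left])
  have "\<forall>\<^sub>F \<mu> in ?F. cinner (R \<mu> u) u = 0"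
    unfolding eventually_at_filter by (simp add: vanish R_def)
  then have lam_vanish: "cinner (R lam u) u = 0"
    using tendsto_unique[OF \<open>?F \<noteq> bot\<close> R_tendsto[of u] tendsto_eventually] by blast
  have "cinner (R \<mu> u) (R lam u) = 0" if "\<mu> \<in> U" "\<mu> \<noteq> lam" for \<mu>
    unfolding R_def
    by (rule cinner_resolvents_eq_0[OF S bij[OF that(1)] bij_lam])
      (use that vanish lam_vanish in \<open>simp_all add: R_def\<close>)
  then have "\<forall>\<^sub>F \<mu> in ?F. cinner (R \<mu> u) (R lam u) = 0"
    unfolding eventually_at_filter by simp
  then have "cinner (R lam u) (R lam u) = 0"
    using tendsto_unique[OF \<open>?F \<noteq> bot\<close> R_tendsto[of "R lam u"] tendsto_eventually] by blast
  then have "R lam u = 0"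
    by (simp add: cinner_eq_zero_iff)
  moreover have "S 0 = 0"
    using linear subspace unfolding clinear_on_def csubspace_def by (metis scaleC_zero_left)
  ultimately show "u = 0"
    using resolvent_right_inverse[OF subspace linear bij_lam, of u] by (simp add: R_def)
qed

section \<open>The supremum argument\<close>

lemma homogeneous_ratio_sup:
  fixes b q :: "'a::real_vector \<Rightarrow> real"
  assumes b_nonneg: "\<And>x. 0 \<le> b x" and q_le: "\<And>x. q x \<le> C * b x"
    and b_scale: "\<And>c x. b (c *\<^sub>R x) = c\<^sup>2 * b x" and q_scale: "\<And>c x. q (c *\<^sub>R x) = c\<^sup>2 * q x"
    and q_pos: "0 < q x0"
  shows "\<exists>M>0. (\<forall>x. q x \<le> M * b x) \<and> (\<forall>\<epsilon>>0. \<exists>x. b x \<le> 1 \<and> M - \<epsilon> < q x)"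
proof -
  let ?X = "q ` {x. b x \<le> 1}"
  define M where "M = Sup ?X"
  have "0 \<in> {x. b x \<le> 1}"
    using b_scale[of 0 0] by simp
  then have nonempty: "?X \<noteq> {}"
    by blast
  have "bdd_above ?X"
  proof (rule bdd_aboveI2)
    fix x assume "x \<in> {x. b x \<le> 1}"
    then have "C * b x \<le> \<bar>C\<bar> * 1"
      using b_nonneg[of x] by (intro mult_mono) auto
    then show "q x \<le> \<bar>C\<bar>"
      using q_le[of x] by simp
  qed
  then have upper: "q x \<le> M" if "b x \<le> 1" for x
    unfolding M_def using that by (intro cSup_upper) auto
  have ratio: "q x \<le> M * b x" for x
  proof (cases "b x = 0")
    case True
    then show ?thesis
      using q_le[of x] by simp
  next
    case False
    then have "0 < b x"
      using b_nonneg[of x] by simp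
    define c where "c = 1 / sqrt (b x)"
    have c: "c\<^sup>2 * b x = 1" "0 < c\<^sup>2"
      using \<open>0 < b x\<close> by (simp_all add: c_def power_divide)
    then have "c\<^sup>2 * q x \<le> c\<^sup>2 * (M * b x)"
      using upper[of "c *\<^sub>R x"] by (simp add: b_scale q_scale algebra_simps)
    then show ?thesis
      using c(2) by simp
  qed
  have "0 < M"
    using ratio[of x0] q_pos b_nonneg[of x0] by (meson less_le_trans mult_nonpos_nonneg not_le)
  moreover have "\<exists>x. b x \<le> 1 \<and> M - \<epsilon> < q x" if "0 < \<epsilon>" for \<epsilon>
    using less_cSupD[OF nonempty, of "M - \<epsilon>"] that unfolding M_def by auto
  ultimately show ?thesis
    using ratio by blast
qed

lemma square_le_defect_bounded_away:
  fixes q :: "'a \<Rightarrow> real"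
  assumes "0 < M" "0 \<le> C" and square: "\<And>x. P x \<Longrightarrow> 0 \<le> q x \<Longrightarrow> (q x)\<^sup>2 \<le> C * (M - q x)"
  shows "\<exists>\<epsilon>>0. \<forall>x. P x \<longrightarrow> q x \<le> M - \<epsilon>"
proof -
  define \<epsilon> where "\<epsilon> = min (M / 2) (M\<^sup>2 / (4 * (C + 1)))"
  have "q x \<le> M - \<epsilon>" if "P x" for x
  proof (rule ccontr)
    assume "\<not> q x \<le> M - \<epsilon>"
    then have big: "M / 2 < q x" and close: "M - q x < M\<^sup>2 / (4 * (C + 1))"
      by (auto simp: \<epsilon>_def)
    have "(M / 2)\<^sup>2 < (q x)\<^sup>2"
      using big assms(1) by (intro power_strict_mono) auto
    also have "\<dots> \<le> C * (M - q x)"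
      using square that big assms(1) by simp
    also have "\<dots> \<le> C * (M\<^sup>2 / (4 * (C + 1)))"
      using close assms(2) by (intro mult_left_mono) auto
    also have "\<dots> < (M / 2)\<^sup>2"
      using assms by (simp add: field_simps power2_eq_square)
    finally have "(M / 2)\<^sup>2 < (M / 2)\<^sup>2" .
    then show False
      by simp
  qed
  moreover have "0 < \<epsilon>"
    using assms by (simp add: \<epsilon>_def)
  ultimately show ?thesis
    by blast
qed

lemma sandwich_defect_norm_sq_le:
  fixes B R :: "'a::complex_inner \<Rightarrow> 'a" and M \<sigma> :: real
  assumes B: "bounded_op B" "symmetric_op UNIV B" and R: "bounded_op R" "symmetric_op UNIV R"
    and dominated: "\<And>x. \<sigma> * Re (cinner (R (B x)) (B x)) \<le> M * Re (cinner (B x) x)"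
  obtains K where "0 \<le> K" "\<And>x. (norm (M *\<^sub>R B x - \<sigma> *\<^sub>R B (R (B x))))\<^sup>2
    \<le> K * (M * Re (cinner (B x) x) - \<sigma> * Re (cinner (R (B x)) (B x)))"
proof -
  define N where "N x = M *\<^sub>R B x - \<sigma> *\<^sub>R B (R (B x))" for x
  have B_ops: "B (x + y) = B x + B y" "B (a *\<^sub>C x) = a *\<^sub>C B x" "cinner (B x) y = cinner x (B y)"
    and R_ops: "R (x + y) = R x + R y" "R (a *\<^sub>C x) = a *\<^sub>C R x" "cinner (R x) y = cinner x (R y)"
    for x y a
    using B(2) R(2) by (simp_all add: symmetric_op_UNIV_iff)
  have "symmetric_op UNIV N"
    unfolding symmetric_op_UNIV_iff N_def
    by (simp add: B_ops R_ops cinner_simps scaleC_diff_right scaleC_scaleR_commute algebra_simps)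
  moreover have Re_N: "Re (cinner (N x) x) = M * Re (cinner (B x) x) - \<sigma> * Re (cinner (R (B x)) (B x))" for x
    by (simp add: N_def cinner_simps B_ops(3)[of "R (B x)"])
  moreover have "bounded_linear N"
  proof -
    have B_lin: "bounded_linear B" and R_lin: "bounded_linear R"
      using B(1) R(1) by (simp_all add: bounded_op_imp_bounded_linear)
    have "bounded_linear (\<lambda>x. B (R (B x)))"
      using bounded_linear_compose[OF B_lin bounded_linear_compose[OF R_lin B_lin]] .
    then show ?thesis
      unfolding N_def
      using bounded_linear_sub bounded_linear_scaleR_right bounded_linear_compose B_lin by blast
  qed
  then obtain K where "0 < K" "\<And>x. norm (N x) \<le> K * norm x"
    by (metis bounded_linear.pos_bounded mult.commute)
  ultimately show thesis
    using dominated nonneg_symmetric_op_norm_sq_le[of N] that[of K]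
    by (simp add: N_def[symmetric])
qed

lemma sandwich_form_sup:
  fixes B R :: "'a::complex_inner \<Rightarrow> 'a" and \<sigma> :: real
  assumes B: "bounded_op B" "symmetric_op UNIV B" and B_nonneg: "\<And>x. 0 \<le> Re (cinner (B x) x)"
    and R: "bounded_op R"
    and pos: "0 < \<sigma> * Re (cinner (R (B x0)) (B x0))"
  shows "\<exists>M>0. (\<forall>x. \<sigma> * Re (cinner (R (B x)) (B x)) \<le> M * Re (cinner (B x) x)) \<and>
    (\<forall>\<epsilon>>0. \<exists>x. Re (cinner (B x) x) \<le> 1 \<and> M - \<epsilon> < \<sigma> * Re (cinner (R (B x)) (B x)))"
proof -
  obtain KB where KB: "0 < KB" "\<And>x. norm (B x) \<le> KB * norm x"
    using bounded_op_pos_bound[OF B(1)] by blast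
  obtain KR where KR: "0 < KR" "\<And>x. norm (R x) \<le> KR * norm x"
    using bounded_op_pos_bound[OF R(1)] by blast
  have dominated: "\<sigma> * Re (cinner (R (B x)) (B x)) \<le> (\<bar>\<sigma>\<bar> * KR * KB) * Re (cinner (B x) x)" for x
  proof -
    have "\<sigma> * Re (cinner (R (B x)) (B x)) \<le> \<bar>\<sigma>\<bar> * (norm (R (B x)) * norm (B x))"
      by (rule scaled_Re_cinner_le)
    also have "\<dots> \<le> \<bar>\<sigma>\<bar> * (KR * (norm (B x))\<^sup>2)"
      using mult_right_mono[OF KR(2)[of "B x"] norm_ge_zero[of "B x"]]
      by (intro mult_left_mono) (simp_all add: power2_eq_square mult.assoc)
    also have "\<dots> \<le> \<bar>\<sigma>\<bar> * (KR * (KB * Re (cinner (B x) x)))"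
      using nonneg_symmetric_op_norm_sq_le[OF B(2) B_nonneg KB(2), of x] KR(1)
      by (intro mult_left_mono) simp_all
    finally show ?thesis
      by (simp add: mult_ac)
  qed
  have B_scale: "B (c *\<^sub>R x) = c *\<^sub>R B x" and R_scale: "R (c *\<^sub>R x) = c *\<^sub>R R x" for c x
    using B(1) R(1) by (simp_all add: bounded_op_imp_bounded_linear linear_cmul bounded_linear.linear)
  show ?thesis
  proof (rule homogeneous_ratio_sup[where b = "\<lambda>x. Re (cinner (B x) x)"
      and q = "\<lambda>x. \<sigma> * Re (cinner (R (B x)) (B x))"])
    show "Re (cinner (B (c *\<^sub>R x)) (c *\<^sub>R x)) = c\<^sup>2 * Re (cinner (B x) x)"
      and "\<sigma> * Re (cinner (R (B (c *\<^sub>R x))) (B (c *\<^sub>R x))) = c\<^sup>2 * (\<sigma> * Re (cinner (R (B x)) (B x)))"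
      for c x
      by (simp_all add: B_scale R_scale cinner_scaleR_left cinner_scaleR_right power2_eq_square)
  qed (use B_nonneg pos dominated in auto)
qed

lemma sandwich_form_sq_le_defect:
  fixes S B R :: "'a::complex_inner \<Rightarrow> 'a" and \<mu> \<sigma> M :: real
  assumes B: "bounded_op B" "symmetric_op UNIV B" and B_nonneg: "\<And>x. 0 \<le> Re (cinner (B x) x)"
    and R: "bounded_op R" "symmetric_op UNIV R"
    and R_in: "\<And>y. R y \<in> D" and R_inverse: "\<And>y. S (R y) - complex_of_real \<mu> *\<^sub>C R y = y"
    and "0 < M" and dominated: "\<And>x. \<sigma> * Re (cinner (R (B x)) (B x)) \<le> M * Re (cinner (B x) x)"
    and perturbed: "\<And>x. x \<in> D \<Longrightarrow> norm x \<le> K * norm (S x + (- \<sigma> / M) *\<^sub>R B x - complex_of_real \<mu> *\<^sub>C x)"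
  obtains C where "0 \<le> C" and "\<And>x. Re (cinner (B x) x) \<le> 1 \<Longrightarrow> 0 \<le> \<sigma> * Re (cinner (R (B x)) (B x)) \<Longrightarrow>
    (\<sigma> * Re (cinner (R (B x)) (B x)))\<^sup>2 \<le> C * (M - \<sigma> * Re (cinner (R (B x)) (B x)))"
proof -
  let ?b = "\<lambda>x. Re (cinner (B x) x)" and ?q = "\<lambda>x. \<sigma> * Re (cinner (R (B x)) (B x))"
    and ?N = "\<lambda>x. M *\<^sub>R B x - \<sigma> *\<^sub>R B (R (B x))"
  obtain KN where KN: "0 \<le> KN" "\<And>x. (norm (?N x))\<^sup>2 \<le> KN * (M * ?b x - ?q x)"
    using sandwich_defect_norm_sq_le[OF B R dominated] by blast
  obtain KB where KB: "0 < KB" "\<And>x. norm (B x) \<le> KB * norm x"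
    using bounded_op_pos_bound[OF B(1)] by blast
  have "0 \<le> \<sigma>\<^sup>2 * (K / M)\<^sup>2 * KN * KB"
    using KN(1) KB(1) by simp
  moreover have "(?q x)\<^sup>2 \<le> (\<sigma>\<^sup>2 * (K / M)\<^sup>2 * KN * KB) * (M - ?q x)" if "?b x \<le> 1" "0 \<le> ?q x" for x
  proof -
    let ?y = "R (B x)"
    have "S ?y + (- \<sigma> / M) *\<^sub>R B ?y - complex_of_real \<mu> *\<^sub>C ?y = (1 / M) *\<^sub>R ?N x"
      using R_inverse[of "B x"] \<open>0 < M\<close> by (simp add: algebra_simps)
    then have "norm ?y \<le> K * norm (?N x) / M"
      using perturbed[OF R_in, of "B x"] \<open>0 < M\<close> by simp
    also have "\<dots> \<le> \<bar>K\<bar> * norm (?N x) / M"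
      using \<open>0 < M\<close> by (intro divide_right_mono mult_right_mono) auto
    also have "\<dots> = \<bar>K / M\<bar> * norm (?N x)"
      using \<open>0 < M\<close> by simp
    finally have y_sq: "(norm ?y)\<^sup>2 \<le> (K / M)\<^sup>2 * (norm (?N x))\<^sup>2"
      by (metis norm_ge_zero power2_abs power_mono power_mult_distrib)
    have "(norm (B x))\<^sup>2 \<le> KB * ?b x"
      by (rule nonneg_symmetric_op_norm_sq_le[OF B(2) B_nonneg KB(2)])
    also have "\<dots> \<le> KB"
      using that(1) KB(1) by (simp add: mult_left_le)
    finally have B_sq: "(norm (B x))\<^sup>2 \<le> KB" .
    have "M * ?b x \<le> M"
      using that(1) \<open>0 < M\<close> by (simp add: mult_left_le)
    then have N_sq: "(norm (?N x))\<^sup>2 \<le> KN * (M - ?q x)"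
      using KN by (meson diff_right_mono mult_left_mono order_trans)
    have "(?q x)\<^sup>2 \<le> (\<bar>\<sigma>\<bar> * (norm ?y * norm (B x)))\<^sup>2"
      using scaled_Re_cinner_le[of \<sigma> ?y "B x"] that(2) by (rule power_mono)
    also have "\<dots> = \<sigma>\<^sup>2 * (norm ?y)\<^sup>2 * (norm (B x))\<^sup>2"
      by (simp add: power_mult_distrib)
    also have "\<dots> \<le> \<sigma>\<^sup>2 * ((K / M)\<^sup>2 * (norm (?N x))\<^sup>2) * KB"
      using y_sq B_sq by (intro mult_mono mult_left_mono) auto
    also have "\<dots> \<le> \<sigma>\<^sup>2 * ((K / M)\<^sup>2 * (KN * (M - ?q x))) * KB"
      using N_sq KB(1) by (intro mult_right_mono mult_left_mono) auto
    finally show ?thesis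
      by (simp add: mult_ac)
  qed
  ultimately show thesis
    by (rule that)
qed

text \<open>If \<open>q x = \<sigma> Re \<langle>R (B x), B x\<rangle>\<close> were positive somewhere, let \<open>M\<close> be the supremum of
  \<open>q\<close> on \<open>{x. \<langle>B x, x\<rangle> \<le> 1}\<close>. For near-maximisers \<open>x\<close> the non-negative operator
  \<open>N = M B - \<sigma> B R B\<close> nearly annihilates \<open>x\<close>, while \<open>S + s B - \<mu>\<close> with \<open>s = - \<sigma> / M\<close>
  maps \<open>R (B x)\<close> to \<open>N x / M\<close>; the bounded inverse of this operator makes \<open>q x\<close> small.\<close>

lemma scaled_sandwich_form_nonpos:
  fixes S B R :: "'a::complex_inner \<Rightarrow> 'a" and \<mu> \<sigma> :: real
  assumes B: "bounded_op B" "symmetric_op UNIV B" and B_nonneg: "\<And>x. 0 \<le> Re (cinner (B x) x)"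
    and R: "bounded_op R" "symmetric_op UNIV R"
    and R_in: "\<And>y. R y \<in> D" and R_inverse: "\<And>y. S (R y) - complex_of_real \<mu> *\<^sub>C R y = y"
    and perturbed: "\<And>s::real. \<exists>K. \<forall>x\<in>D. norm x \<le> K * norm (S x + s *\<^sub>R B x - complex_of_real \<mu> *\<^sub>C x)"
  shows "\<sigma> * Re (cinner (R (B x0)) (B x0)) \<le> 0"
proof (rule ccontr)
  let ?b = "\<lambda>x. Re (cinner (B x) x)" and ?q = "\<lambda>x. \<sigma> * Re (cinner (R (B x)) (B x))"
  assume "\<not> ?q x0 \<le> 0"
  then obtain M where M: "0 < M" "\<And>x. ?q x \<le> M * ?b x"
    and approx: "\<And>\<epsilon>. 0 < \<epsilon> \<Longrightarrow> \<exists>x. ?b x \<le> 1 \<and> M - \<epsilon> < ?q x"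
    using sandwich_form_sup[OF B B_nonneg R(1), of \<sigma> x0] by auto
  obtain K where K_bound: "\<And>x. x \<in> D \<Longrightarrow> norm x \<le> K * norm (S x + (- \<sigma> / M) *\<^sub>R B x - complex_of_real \<mu> *\<^sub>C x)"
    using perturbed by blast
  have "\<exists>\<epsilon>>0. \<forall>x. ?b x \<le> 1 \<longrightarrow> ?q x \<le> M - \<epsilon>"
  proof (rule sandwich_form_sq_le_defect[OF B B_nonneg R R_in R_inverse M])
    show "x \<in> D \<Longrightarrow> norm x \<le> K * norm (S x + (- \<sigma> / M) *\<^sub>R B x - complex_of_real \<mu> *\<^sub>C x)" for x
      by (rule K_bound)
    fix C
    assume "0 \<le> C" "\<And>x. ?b x \<le> 1 \<Longrightarrow> 0 \<le> ?q x \<Longrightarrow> (?q x)\<^sup>2 \<le> C * (M - ?q x)"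
    then show ?thesis
      by (rule square_le_defect_bounded_away[OF M(1)])
  qed
  then obtain \<epsilon> where "0 < \<epsilon>" and bounded_away: "\<And>x. ?b x \<le> 1 \<Longrightarrow> ?q x \<le> M - \<epsilon>"
    by blast
  from approx[OF \<open>0 < \<epsilon>\<close>] obtain x where "?b x \<le> 1" "M - \<epsilon> < ?q x"
    by blast
  with bounded_away show False
    by fastforce
qed

lemma cinner_resolvent_sandwich_eq_0:
  fixes S B :: "'a::complex_inner \<Rightarrow> 'a" and \<mu> :: real
  assumes S: "symmetric_op D S"
    and B: "bounded_op B" "symmetric_op UNIV B" and B_nonneg: "\<And>x. 0 \<le> Re (cinner (B x) x)"
    and resolvent_set: "\<And>s::real. complex_of_real \<mu> \<notin> op_spectrum D (\<lambda>x. S x + s *\<^sub>R B x)"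
  shows "cinner (resolvent D S (complex_of_real \<mu>) (B x)) (B x) = 0"
proof -
  let ?R = "resolvent D S (complex_of_real \<mu>)"
  have subspace: "csubspace D" and linear: "clinear_on D S"
    using S by (simp_all add: symmetric_op_def)
  have \<mu>: "complex_of_real \<mu> \<notin> op_spectrum D S"
    using resolvent_set[of 0] by simp
  then have bij: "bij_betw (\<lambda>x. S x - complex_of_real \<mu> *\<^sub>C x) D UNIV"
    by (simp add: not_in_op_spectrum_iff)
  have R: "bounded_op ?R" "symmetric_op UNIV ?R"
    using bounded_op_resolvent[OF subspace linear \<mu>] symmetric_op_resolvent[OF S bij] by simp_all
  have perturbed: "\<exists>K. \<forall>x\<in>D. norm x \<le> K * norm (S x + s *\<^sub>R B x - complex_of_real \<mu> *\<^sub>C x)" for s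
    using norm_le_if_not_in_op_spectrum[OF _ _ resolvent_set[of s]]
      symmetric_op_add_scaleR[OF S B(2), of s] unfolding symmetric_op_def by metis
  have "\<sigma> * Re (cinner (?R (B x)) (B x)) \<le> 0" for \<sigma>
    using scaled_sandwich_form_nonpos[OF B B_nonneg R resolvent_in_domain[OF subspace linear bij]
        resolvent_right_inverse[OF subspace linear bij] perturbed] .
  from this[of 1] this[of "-1"] have "Re (cinner (?R (B x)) (B x)) = 0"
    by simp
  moreover have "Im (cinner (?R (B x)) (B x)) = 0"
    using Im_cinner_symmetric_op[OF R(2)] by simp
  ultimately show ?thesis
    by (simp add: complex_eq_iff)
qed

lemma limit_point_of_common_resolvent_set_in_spectrum:
  fixes A B :: "'a::complex_inner \<Rightarrow> 'a" and lam t :: real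
  assumes A: "symmetric_op D A"
    and B: "bounded_op B" "symmetric_op UNIV B" and B_nonneg: "\<And>x. 0 \<le> Re (cinner (B x) x)"
    and "B x1 \<noteq> 0"
    and limit_point: "lam islimpt {\<mu>::real. \<forall>t::real. complex_of_real \<mu> \<notin> op_spectrum D (\<lambda>x. A x + t *\<^sub>R B x)}"
  shows "complex_of_real lam \<in> op_spectrum D (\<lambda>x. A x + t *\<^sub>R B x)"
proof (rule ccontr)
  define U where "U = {\<mu>::real. \<forall>t::real. complex_of_real \<mu> \<notin> op_spectrum D (\<lambda>x. A x + t *\<^sub>R B x)}"
  define S where "S = (\<lambda>x. A x + t *\<^sub>R B x)"
  assume "complex_of_real lam \<notin> op_spectrum D (\<lambda>x. A x + t *\<^sub>R B x)"
  then have lam: "complex_of_real lam \<notin> op_spectrum D S"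
    by (simp add: S_def)
  have S: "symmetric_op D S"
    unfolding S_def using A B(2) by (rule symmetric_op_add_scaleR)
  have shifted: "complex_of_real \<mu> \<notin> op_spectrum D (\<lambda>x. S x + s *\<^sub>R B x)" if "\<mu> \<in> U" for \<mu> s
  proof -
    have "(\<lambda>x. S x + s *\<^sub>R B x) = (\<lambda>x. A x + (t + s) *\<^sub>R B x)"
      by (simp add: S_def scaleR_add_left add.assoc)
    then show ?thesis
      using that by (simp add: U_def)
  qed
  have "B x1 = 0"
  proof (rule eq_0_if_resolvent_form_vanishes[OF S lam])
    show "lam islimpt U"
      using limit_point by (simp add: U_def)
    show "bij_betw (\<lambda>x. S x - complex_of_real \<mu> *\<^sub>C x) D UNIV" if "\<mu> \<in> U" for \<mu>
      using shifted[OF that, of 0] by (simp add: not_in_op_spectrum_iff)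
    show "cinner (resolvent D S (complex_of_real \<mu>) (B x1)) (B x1) = 0" if "\<mu> \<in> U" for \<mu>
      by (rule cinner_resolvent_sandwich_eq_0[OF S B B_nonneg shifted[OF that]])
  qed
  with \<open>B x1 \<noteq> 0\<close> show False ..
qed

theorem lemma2p8:
  fixes A B :: "'a::chilbert_space \<Rightarrow> 'a" and D :: "'a set" and lam :: real
  assumes "self_adjoint D A"
    and "bounded_op B" and "self_adjoint UNIV B"
    and "\<forall>x. Im (cinner (B x) x) = 0 \<and> 0 \<le> Re (cinner (B x) x)"
    and "\<exists>x. B x \<noteq> 0"
    and "lam islimpt {\<mu>::real. \<forall>t::real. complex_of_real \<mu> \<notin> op_spectrum D (\<lambda>x. A x + t *\<^sub>R B x)}"
  shows "(\<forall>t::real. complex_of_real lam \<in> op_spectrum D (\<lambda>x. A x + t *\<^sub>R B x)) \<and>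
         (\<forall>\<mu>::real. \<mu> islimpt {\<nu>::real. \<forall>t::real. complex_of_real \<nu> \<notin> op_spectrum D (\<lambda>x. A x + t *\<^sub>R B x)}
             \<longrightarrow> \<mu> \<notin> {\<nu>::real. \<forall>t::real. complex_of_real \<nu> \<notin> op_spectrum D (\<lambda>x. A x + t *\<^sub>R B x)})"
proof -
  obtain x1 where "B x1 \<noteq> 0"
    using assms(5) by blast
  have "0 \<le> Re (cinner (B x) x)" for x
    using assms(4) by blast
  note in_spectrum = limit_point_of_common_resolvent_set_in_spectrum
    [OF symmetric_op_if_self_adjoint[OF assms(1)] assms(2) symmetric_op_if_self_adjoint[OF assms(3)]
      this \<open>B x1 \<noteq> 0\<close>]
  show ?thesis
  proof (intro conjI allI impI)
    show "complex_of_real lam \<in> op_spectrum D (\<lambda>x. A x + t *\<^sub>R B x)" for t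
      using assms(6) by (rule in_spectrum)
    fix \<mu> :: real
    assume "\<mu> islimpt {\<nu>::real. \<forall>t::real. complex_of_real \<nu> \<notin> op_spectrum D (\<lambda>x. A x + t *\<^sub>R B x)}"
    then have "complex_of_real \<mu> \<in> op_spectrum D (\<lambda>x. A x + 0 *\<^sub>R B x)"
      by (rule in_spectrum)
    then show "\<mu> \<notin> {\<nu>::real. \<forall>t::real. complex_of_real \<nu> \<notin> op_spectrum D (\<lambda>x. A x + t *\<^sub>R B x)}"
      by blast
  qed
qed

end
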